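(* Let $s \ge 1$ and suppose $D$ is a $T_s$-free digraph on $n$ vertices. Then for every $k \ge 1$ there exists a $K_s$-free graph $G$ on $n$ vertices such that \[ i_k(G) \le \left(\frac{e}{k}\right)^k \cdot \mathrm{fwi}_k(D). \]
   Context: $T_s$ denotes the transitive tournament on $s$ vertices; a digraph is $T_s$-free if it contains no copy of $T_s$. For a digraph $D$, a $k$-tuple $(v_1,\dots,v_k) \in V(D)^k$ is forward independent if there are no $i<j$ in $[k]$ with $(v_i,v_j)$ an arc of $D$; $\mathrm{fwi}_k(D)$ denotes the number of forward independent $k$-tuples in $D$. For a graph $G$, $i_k(G)$ denotes the number of independent sets of size $k$ in $G$. *)

theory Defs
  imports Complex_Main
begin

text \<open>Loops are excluded; both arcs u->v and v->u
may be present.\<close>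

definition digraph :: "'a set \<Rightarrow> ('a \<Rightarrow> 'a \<Rightarrow> bool) \<Rightarrow> bool" where
  "digraph V A \<longleftrightarrow> finite V \<and> (\<forall>v. \<not> A v v)"

definition graph :: "'a set \<Rightarrow> ('a \<Rightarrow> 'a \<Rightarrow> bool) \<Rightarrow> bool" where
  "graph V E \<longleftrightarrow> finite V \<and> (\<forall>v. \<not> E v v) \<and> (\<forall>u v. E u v \<longrightarrow> E v u)"

definition Ts_free :: "nat \<Rightarrow> 'a set \<Rightarrow> ('a \<Rightarrow> 'a \<Rightarrow> bool) \<Rightarrow> bool" where
  "Ts_free s V A \<longleftrightarrow> \<not> (\<exists>f. f ` {..<s} \<subseteq> V \<and> inj_on f {..<s} \<and>
        (\<forall>i j. i < j \<and> j < s \<longrightarrow> A (f i) (f j)))"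

definition Ks_free :: "nat \<Rightarrow> 'a set \<Rightarrow> ('a \<Rightarrow> 'a \<Rightarrow> bool) \<Rightarrow> bool" where
  "Ks_free s V E \<longleftrightarrow> \<not> (\<exists>S. S \<subseteq> V \<and> card S = s \<and>
        (\<forall>u\<in>S. \<forall>v\<in>S. u \<noteq> v \<longrightarrow> E u v))"

text \<open>Forward independent k-tuples (v_1,...,v_k) in V^k, represented as lists
of length k (entries need not be distinct).\<close>
definition fwi :: "nat \<Rightarrow> 'a set \<Rightarrow> ('a \<Rightarrow> 'a \<Rightarrow> bool) \<Rightarrow> nat" where
  "fwi k V A = card {xs. length xs = k \<and> set xs \<subseteq> V \<and>
        (\<forall>i j. i < j \<and> j < k \<longrightarrow> \<not> A (xs ! i) (xs ! j))}"

definition indep_count :: "nat \<Rightarrow> 'a set \<Rightarrow> ('a \<Rightarrow> 'a \<Rightarrow> bool) \<Rightarrow> nat" where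
  "indep_count k V E = card {S. S \<subseteq> V \<and> card S = k \<and>
        (\<forall>u\<in>S. \<forall>v\<in>S. \<not> E u v)}"

end

theory Submission
  imports Defs "HOL-Combinatorics.Multiset_Permutations"
begin

text \<open>For an ordering f of the vertices, join positions i < j whenever D has the arc
f i \<rightarrow> f j. Read in increasing order, a clique of this graph is a transitive
tournament of D, so the graph is K_s-free, and an independent k-set is a forward
independent k-tuple. A fixed distinct forward independent k-tuple is increasing in exactly
a 1/k! fraction of all orderings, so averaging yields an ordering whose graph has at most
fwi_k(D)/k! independent k-sets; finally 1/k! \<le> (e/k)^k since k^k/k! is one term of
the series of e^k.\<close>

lemma power_div_fact_le_exp:
  fixes x :: real
  assumes "0 \<le> x"
  shows "x ^ k / fact k \<le> exp x"
proof -
  have exp: "(\<lambda>n. x ^ n /\<^sub>R fact n) sums exp x"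
    by (rule exp_converges)
  have "(\<Sum>n\<in>{k}. x ^ n /\<^sub>R fact n) \<le> (\<Sum>n. x ^ n /\<^sub>R fact n)"
    using exp assms by (intro sum_le_suminf) (auto simp: sums_iff)
  then show ?thesis
    using exp by (simp add: sums_iff divide_inverse mult.commute)
qed

lemma inverse_fact_le_exp_div_power: "1 / fact k \<le> (exp 1 / real k) ^ k"
proof (cases "k = 0")
  case False
  have "(exp 1 / real k) ^ k = exp (real k) / real k ^ k"
    by (simp add: power_divide flip: exp_of_nat_mult)
  then show ?thesis
    using power_div_fact_le_exp[of "real k" k] False by (simp add: field_simps)
qed simp

lemma sorted_wrt_iff_all_less:
  fixes xs :: "'a::linorder list"
  assumes "sorted_wrt (<) xs"
  shows "sorted_wrt R xs \<longleftrightarrow> (\<forall>x\<in>set xs. \<forall>y\<in>set xs. x < y \<longrightarrow> R x y)"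
  using assms by (induction xs) auto

lemma sorted_wrt_map_sorted_list_of_set:
  fixes S :: "'a::linorder set"
  assumes "finite S"
  shows "sorted_wrt R (map f (sorted_list_of_set S)) \<longleftrightarrow>
         (\<forall>u\<in>S. \<forall>v\<in>S. u < v \<longrightarrow> R (f u) (f v))"
  using assms by (simp add: sorted_wrt_map sorted_wrt_iff_all_less)

lemma ex_permutes_map_eq:
  assumes xs: "xs \<in> permutations_of_set S" and ys: "ys \<in> permutations_of_set S"
  obtains \<tau> where "\<tau> permutes S" "map \<tau> xs = ys"
proof -
  let ?I = "{..<length xs}"
  have xs_bij: "bij_betw ((!) xs) ?I S" and ys_bij: "bij_betw ((!) ys) ?I S"
    using xs ys by (auto intro!: bij_betw_nth simp: permutations_of_set_def
        length_finite_permutations_of_set)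
  define \<tau> where "\<tau> x = (if x \<in> S then ys ! inv_into ?I ((!) xs) x else x)" for x
  have "bij_betw ((!) ys \<circ> inv_into ?I ((!) xs)) S S"
    using bij_betw_inv_into[OF xs_bij] ys_bij by (rule bij_betw_trans)
  then have "bij_betw \<tau> S S"
    by (rule bij_betw_cong[THEN iffD1, rotated]) (simp add: \<tau>_def)
  then have "\<tau> permutes S"
    by (rule bij_imp_permutes) (simp add: \<tau>_def)
  moreover have "map \<tau> xs = ys"
  proof (rule nth_equalityI)
    show "length (map \<tau> xs) = length ys"
      using xs ys by (simp add: length_finite_permutations_of_set)
    fix i assume "i < length (map \<tau> xs)"
    then show "map \<tau> xs ! i = ys ! i"
      using xs_bij bij_betw_apply[OF xs_bij]
      by (simp add: \<tau>_def bij_betw_def inv_into_f_f)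
  qed
  ultimately show thesis by (rule that)
qed

abbreviation forward_indep :: "('a \<Rightarrow> 'a \<Rightarrow> bool) \<Rightarrow> 'a list \<Rightarrow> bool" where
  "forward_indep A \<equiv> sorted_wrt (\<lambda>x y. \<not> A x y)"

definition forward_graph :: "('a \<Rightarrow> 'a \<Rightarrow> bool) \<Rightarrow> (nat \<Rightarrow> 'a) \<Rightarrow> nat \<Rightarrow> nat \<Rightarrow> bool" where
  "forward_graph A f i j \<longleftrightarrow> (i < j \<and> A (f i) (f j)) \<or> (j < i \<and> A (f j) (f i))"

lemma graph_forward_graph: "graph {..<n} (forward_graph A f)"
  unfolding graph_def forward_graph_def by auto

lemma forward_graph_clique_imp_sorted_wrt:
  assumes "finite S" and "\<forall>u\<in>S. \<forall>v\<in>S. u \<noteq> v \<longrightarrow> forward_graph A f u v"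
  shows "sorted_wrt A (map f (sorted_list_of_set S))"
  using assms unfolding sorted_wrt_map_sorted_list_of_set[OF assms(1)] forward_graph_def
  by (metis less_asym)

lemma forward_graph_independent_iff:
  assumes "finite S"
  shows "(\<forall>u\<in>S. \<forall>v\<in>S. \<not> forward_graph A f u v) \<longleftrightarrow>
         forward_indep A (map f (sorted_list_of_set S))"
  using assms by (auto simp: sorted_wrt_map_sorted_list_of_set forward_graph_def)

lemma not_Ts_free_if_sorted_wrt:
  assumes "distinct xs" "set xs \<subseteq> V" "length xs = s" "sorted_wrt A xs"
  shows "\<not> Ts_free s V A"
proof -
  have "(!) xs ` {..<s} \<subseteq> V" "inj_on ((!) xs) {..<s}"
    using assms by (auto intro: inj_on_nth)
  moreover have "\<forall>i j. i < j \<and> j < s \<longrightarrow> A (xs ! i) (xs ! j)"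
    using assms by (simp add: sorted_wrt_iff_nth_less)
  ultimately show ?thesis
    unfolding Ts_free_def by blast
qed

lemma Ks_free_forward_graph:
  assumes "inj_on f {..<n}" "f ` {..<n} \<subseteq> V" "Ts_free s V A"
  shows "Ks_free s {..<n} (forward_graph A f)"
  unfolding Ks_free_def
proof
  assume "\<exists>S. S \<subseteq> {..<n} \<and> card S = s \<and> (\<forall>u\<in>S. \<forall>v\<in>S. u \<noteq> v \<longrightarrow> forward_graph A f u v)"
  then obtain S where S: "S \<subseteq> {..<n}" "card S = s"
    and clique: "\<forall>u\<in>S. \<forall>v\<in>S. u \<noteq> v \<longrightarrow> forward_graph A f u v"
    by blast
  have "finite S"
    using S(1) finite_subset by blast
  let ?xs = "map f (sorted_list_of_set S)"
  have "distinct ?xs"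
    using \<open>finite S\<close> S(1) inj_on_subset[OF assms(1)] by (simp add: distinct_map)
  moreover have "set ?xs \<subseteq> V" "length ?xs = s"
    using \<open>finite S\<close> S assms(2) by auto
  moreover have "sorted_wrt A ?xs"
    using \<open>finite S\<close> clique by (rule forward_graph_clique_imp_sorted_wrt)
  ultimately show False
    using not_Ts_free_if_sorted_wrt assms(3) by blast
qed

lemma indep_count_forward_graph:
  "indep_count k {..<n} (forward_graph A f) =
   card {S. S \<subseteq> {..<n} \<and> card S = k \<and> forward_indep A (map f (sorted_list_of_set S))}"
  unfolding indep_count_def
  by (intro arg_cong[where f = card] Collect_cong)
     (metis finite_lessThan finite_subset forward_graph_independent_iff)

lemma card_distinct_forward_indep_le_fwi:
  assumes "inj_on f {..<n}" "f ` {..<n} \<subseteq> V" "finite V"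
  shows "card {js. length js = k \<and> set js \<subseteq> {..<n} \<and> distinct js \<and>
                   forward_indep A (map f js)} \<le> fwi k V A"
  unfolding fwi_def
proof (rule card_inj_on_le)
  show "inj_on (map f) {js. length js = k \<and> set js \<subseteq> {..<n} \<and> distinct js \<and>
                            forward_indep A (map f js)}"
    using assms(1) by (auto intro!: inj_onI dest: inj_on_map_eq_map[OF inj_on_subset])
  show "map f ` {js. length js = k \<and> set js \<subseteq> {..<n} \<and> distinct js \<and>
                     forward_indep A (map f js)}
        \<subseteq> {xs. length xs = k \<and> set xs \<subseteq> V \<and> (\<forall>i j. i < j \<and> j < k \<longrightarrow> \<not> A (xs ! i) (xs ! j))}"
    using assms(2) by (auto simp: sorted_wrt_iff_nth_less) blast
  show "finite {xs. length xs = k \<and> set xs \<subseteq> V \<and> (\<forall>i j. i < j \<and> j < k \<longrightarrow> \<not> A (xs ! i) (xs ! j))}"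
    using finite_lists_length_eq[OF assms(3), of k] by (rule rev_finite_subset) auto
qed

lemma card_distinct_lists_map_permutes:
  assumes "\<sigma> permutes T"
  shows "card {js. length js = k \<and> set js \<subseteq> T \<and> distinct js \<and> P (map \<sigma> js)} =
         card {js. length js = k \<and> set js \<subseteq> T \<and> distinct js \<and> P js}"
proof (rule bij_betw_same_card[of "map \<sigma>"], rule bij_betw_byWitness[where f' = "map (inv \<sigma>)"])
  have inv: "inv \<sigma> permutes T"
    using assms by (rule permutes_inv)
  show "\<forall>js\<in>{js. length js = k \<and> set js \<subseteq> T \<and> distinct js \<and> P (map \<sigma> js)}.
          map (inv \<sigma>) (map \<sigma> js) = js"
    "\<forall>js\<in>{js. length js = k \<and> set js \<subseteq> T \<and> distinct js \<and> P js}. map \<sigma> (map (inv \<sigma>) js) = js"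
    using permutes_inverses[OF assms] by (simp_all add: map_idI)
  show "map \<sigma> ` {js. length js = k \<and> set js \<subseteq> T \<and> distinct js \<and> P (map \<sigma> js)}
        \<subseteq> {js. length js = k \<and> set js \<subseteq> T \<and> distinct js \<and> P js}"
    using assms permutes_inj_on[OF assms]
    by (auto simp: distinct_map permutes_in_image) blast
  show "map (inv \<sigma>) ` {js. length js = k \<and> set js \<subseteq> T \<and> distinct js \<and> P js}
        \<subseteq> {js. length js = k \<and> set js \<subseteq> T \<and> distinct js \<and> P (map \<sigma> js)}"
    using inv permutes_inj_on[OF inv] permutes_inverses[OF assms]
    by (auto simp: distinct_map permutes_in_image map_idI) blast
qed

lemma card_permutes_map_eq:
  assumes "S \<subseteq> T" "xs \<in> permutations_of_set S" "ys \<in> permutations_of_set S"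
  shows "card {\<sigma>. \<sigma> permutes T \<and> P (map \<sigma> xs)} = card {\<sigma>. \<sigma> permutes T \<and> P (map \<sigma> ys)}"
proof -
  obtain \<tau> where \<tau>_S: "\<tau> permutes S" and \<tau>: "map \<tau> xs = ys"
    using assms(2,3) by (rule ex_permutes_map_eq)
  have \<tau>_T: "\<tau> permutes T"
    using \<tau>_S assms(1) by (rule permutes_subset)
  have map_comp: "map (\<sigma> \<circ> \<tau>) xs = map \<sigma> ys" "map (\<sigma> \<circ> inv \<tau>) ys = map \<sigma> xs" for \<sigma>
    using \<tau> permutes_inverses(2)[OF \<tau>_T] by (auto intro: map_idI)
  have "bij_betw (\<lambda>\<sigma>. \<sigma> \<circ> \<tau>) {\<sigma>. \<sigma> permutes T \<and> P (map \<sigma> ys)} {\<sigma>. \<sigma> permutes T \<and> P (map \<sigma> xs)}"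
    using \<tau>_T
    by (intro bij_betw_byWitness[where f' = "\<lambda>\<sigma>. \<sigma> \<circ> inv \<tau>"])
       (auto simp: map_comp comp_assoc permutes_inv_o permutes_compose permutes_inv)
  then show ?thesis
    by (simp add: bij_betw_same_card)
qed

lemma sum_card_filter_swap:
  assumes "finite A" "finite B"
  shows "(\<Sum>x\<in>A. card {y \<in> B. R x y}) = (\<Sum>y\<in>B. card {x \<in> A. R x y})"
  unfolding card_eq_sum using assms by (rule sum.swap_restrict)

text \<open>Double counting of the pairs (\<sigma>, js) with P (map \<sigma> js): for fixed \<sigma> they are as
many as the lists satisfying P, and each of the k! orderings of a k-set S contributes as
many as sorted_list_of_set S does.\<close>

lemma fact_card_mult_card_distinct_lists:
  fixes T :: "'a::linorder set" and P :: "'a list \<Rightarrow> bool"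
  assumes "finite T"
  shows "fact (card T) * card {js. length js = k \<and> set js \<subseteq> T \<and> distinct js \<and> P js} =
         fact k * (\<Sum>\<sigma> | \<sigma> permutes T.
                     card {S. S \<subseteq> T \<and> card S = k \<and> P (map \<sigma> (sorted_list_of_set S))})"
proof -
  define Perms where "Perms = {\<sigma>. \<sigma> permutes T}"
  define L where "L = {js. length js = k \<and> set js \<subseteq> T \<and> distinct js}"
  define K where "K = {S. S \<subseteq> T \<and> card S = k}"
  define c where "c js = card {\<sigma> \<in> Perms. P (map \<sigma> js)}" for js
  have fin: "finite Perms" "finite L" "finite K"
    using assms finite_permutations finite_lists_length_eq[OF assms, of k]
    by (auto simp: Perms_def L_def K_def intro: rev_finite_subset)
  have L_UN: "L = (\<Union>S\<in>K. permutations_of_set S)"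
    by (auto simp: L_def K_def permutations_of_set_def distinct_card)
  have c_sorted: "c js = c (sorted_list_of_set S)" if "S \<in> K" "js \<in> permutations_of_set S" for S js
    using that card_permutes_map_eq[of S T js "sorted_list_of_set S" P] finite_subset[OF _ assms]
    by (auto simp: c_def Perms_def K_def permutations_of_set_def)
  have "fact (card T) * card {js \<in> L. P js} = (\<Sum>\<sigma>\<in>Perms. card {js \<in> L. P (map \<sigma> js)})"
    using assms card_distinct_lists_map_permutes[of _ T k P]
    by (simp add: Perms_def L_def card_permutations)
  also have "\<dots> = (\<Sum>js\<in>L. c js)"
    unfolding c_def using fin(1,2) by (rule sum_card_filter_swap)
  also have "\<dots> = (\<Sum>S\<in>K. \<Sum>js\<in>permutations_of_set S. c js)"
    unfolding L_UN
    by (rule sum.UNION_disjoint[OF fin(3)]) (simp, fastforce simp: permutations_of_set_def)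
  also have "\<dots> = (\<Sum>S\<in>K. fact k * c (sorted_list_of_set S))"
    using c_sorted finite_subset[OF _ assms] by (intro sum.cong) (auto simp: K_def)
  also have "\<dots> = fact k * (\<Sum>S\<in>K. c (sorted_list_of_set S))"
    by (simp add: sum_distrib_left)
  also have "(\<Sum>S\<in>K. c (sorted_list_of_set S)) =
             (\<Sum>\<sigma>\<in>Perms. card {S \<in> K. P (map \<sigma> (sorted_list_of_set S))})"
    unfolding c_def using fin(3,1) by (rule sum_card_filter_swap)
  finally show ?thesis
    by (simp add: Perms_def L_def K_def)
qed

lemma ex_le_if_sum_le_card_mult:
  fixes g :: "'a \<Rightarrow> nat"
  assumes "finite X" "X \<noteq> {}" "sum g X \<le> card X * b"
  shows "\<exists>x\<in>X. g x \<le> b"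
proof (rule ccontr)
  assume "\<not> (\<exists>x\<in>X. g x \<le> b)"
  then have "(\<Sum>x\<in>X. b) < sum g X"
    using assms(1,2) by (intro sum_strict_mono) auto
  with assms(3) show False
    by simp
qed

lemma ex_ordering_indep_count_forward_graph_le:
  assumes "finite V" "card V = n"
  obtains f where "bij_betw f {..<n} V"
    "fact k * indep_count k {..<n} (forward_graph A f) \<le> fwi k V A"
proof -
  obtain f0 where f0: "bij_betw f0 {..<n} V"
    using ex_bij_betw_nat_finite assms by (metis atLeast0LessThan)
  define M where "M = card {js. length js = k \<and> set js \<subseteq> {..<n} \<and> distinct js \<and>
                                forward_indep A (map f0 js)}"
  define N where "N \<sigma> = card {S. S \<subseteq> {..<n} \<and> card S = k \<and>
                                forward_indep A (map (f0 \<circ> \<sigma>) (sorted_list_of_set S))}" for \<sigma>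
  have "fact n * M = fact k * (\<Sum>\<sigma> | \<sigma> permutes {..<n}. N \<sigma>)"
    using fact_card_mult_card_distinct_lists[of "{..<n}" k "\<lambda>js. forward_indep A (map f0 js)"]
    by (simp add: M_def N_def)
  then obtain \<sigma> where \<sigma>: "\<sigma> permutes {..<n}" and N_le: "fact k * N \<sigma> \<le> M"
    using ex_le_if_sum_le_card_mult[of "{\<sigma>. \<sigma> permutes {..<n}}" "\<lambda>\<sigma>. fact k * N \<sigma>" M]
    by (auto simp: finite_permutations card_permutations sum_distrib_left intro: permutes_id)
  have "M \<le> fwi k V A"
    unfolding M_def using f0 assms(1)
    by (intro card_distinct_forward_indep_le_fwi) (auto simp: bij_betw_def)
  with N_le have "fact k * indep_count k {..<n} (forward_graph A (f0 \<circ> \<sigma>)) \<le> fwi k V A"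
    by (simp add: indep_count_forward_graph N_def)
  moreover have "bij_betw (f0 \<circ> \<sigma>) {..<n} V"
    using permutes_imp_bij[OF \<sigma>] f0 by (rule bij_betw_trans)
  ultimately show thesis
    using that by blast
qed

theorem lemma2p3:
  fixes V :: "'a set" and A :: "'a \<Rightarrow> 'a \<Rightarrow> bool" and s k n :: nat
  assumes "s \<ge> 1" and "digraph V A" and "card V = n" and "Ts_free s V A"
    and "k \<ge> 1"
  shows "\<exists>(W :: nat set) E. graph W E \<and> card W = n \<and> Ks_free s W E \<and>
           real (indep_count k W E) \<le> (exp 1 / real k) ^ k * real (fwi k V A)"
proof -
  have "finite V"
    using assms(2) by (simp add: digraph_def)
  then obtain f where f: "bij_betw f {..<n} V"
    and le: "fact k * indep_count k {..<n} (forward_graph A f) \<le> fwi k V A"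
    using assms(3) by (rule ex_ordering_indep_count_forward_graph_le)
  let ?G = "forward_graph A f"
  have "fact k * real (indep_count k {..<n} ?G) \<le> real (fwi k V A)"
    using le by (metis of_nat_fact of_nat_le_iff of_nat_mult)
  then have "real (indep_count k {..<n} ?G) \<le> 1 / fact k * real (fwi k V A)"
    by (simp add: field_simps)
  also have "\<dots> \<le> (exp 1 / real k) ^ k * real (fwi k V A)"
    by (intro mult_right_mono inverse_fact_le_exp_div_power) simp
  finally have "real (indep_count k {..<n} ?G) \<le> (exp 1 / real k) ^ k * real (fwi k V A)" .
  moreover have "Ks_free s {..<n} ?G"
    using f assms(4) by (intro Ks_free_forward_graph) (auto simp: bij_betw_def)
  ultimately show ?thesis
    using graph_forward_graph by fastforce
qed

end
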